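(* Let $\beta$ be a braid on $b$ strands, let $2\le a<b$, let $1\le i\le b-a+1$, and let $$\alpha^{\pm}=(\sigma_i^{\pm1}\sigma_{i+1}^{\pm1}\cdots\sigma_{i+a-2}^{\pm1})^{a}$$ (a positive, respectively negative, full twist on the $a$ strands in positions $i,\dots,i+a-1$). For $m\ge 1$ let $L^m_{\pm}$ denote the transverse link given by the closure of $\beta(\alpha^{\pm})^m$. Then (for each choice of sign) there is some $N$ such that for all $m>N$, $\psi(L^m_{\pm})=0$ if and only if $\psi(L^{m+1}_{\pm})=0$. Similarly, for all such $m$, $\psi'(L^m_{\pm})=0$ if and only if $\psi'(L^{m+1}_{\pm})=0$.
   Context: $B_b$ is the Artin braid group with standard generators $\sigma_1,\dots,\sigma_{b-1}$; closures of braids are transverse links in the standard contact $S^3$. Khovanov complex conventions: for an oriented diagram with $n_\pm$ positive/negative crossings, generators are Kauffman states (a $0$- or $1$-resolution at each crossing) with each resulting circle labelled $v_+$ or $v_-$; homological grading $i=r-n_-$ ($r$ = number of $1$-resolutions), quantum grading $j=p+i+n_+-n_-$ where $p$ = (number of $v_+$) − (number of $v_-$); the differential uses the standard merge/split maps. $\psi(\hat\beta)$ (Plamenevskaya's invariant) is the Khovanov homology class of the generator labelling every circle $v_-$ in the oriented resolution of the closed braid diagram (the $0$-resolution at positive crossings, the $1$-resolution at negative crossings). $\psi'$ is the analogous class in reduced Khovanov homology over $\mathbb{Z}/2\mathbb{Z}$ (quotient by generators with $v_-$ on the circle through a marked point), given by labelling the marked circle $v_+$ and all other circles $v_-$ in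 the oriented resolution. *)

theory Defs
  imports Main
begin

(* Braid words.  A letter (k, True) is sigma_k, (k, False) is sigma_k^-1. *)
type_synonym bword = "(nat \<times> bool) list"

definition braid_word :: "nat \<Rightarrow> bword \<Rightarrow> bool" where
  "braid_word b w \<longleftrightarrow> (\<forall>l\<in>set w. 1 \<le> fst l \<and> fst l < b)"

definition full_twist :: "nat \<Rightarrow> nat \<Rightarrow> bool \<Rightarrow> bword" where
  "full_twist a i e = concat (replicate a (map (\<lambda>k. (k, e)) [i..<i + a - 1]))"

(* The crossing number t (0 <= t < length w) lies between level t and
   level (t+1) mod length w (levels are cyclic because of the closure).
   A point (t,x) is the intersection of the diagram with level t at strand
   position x, 1 <= x <= b.  A state s is the set of crossings given the
   1-resolution.                                                       *)
definition pts :: "bword \<Rightarrow> nat \<Rightarrow> (nat \<times> nat) set" where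
  "pts w b = {0..<length w} \<times> {1..b}"

definition nxt :: "bword \<Rightarrow> nat \<Rightarrow> nat" where
  "nxt w t = Suc t mod length w"

(* positive crossing: 0-resolution is the oriented (vertical) smoothing;
   negative crossing: 1-resolution is the oriented (vertical) smoothing *)
definition vertical :: "bword \<Rightarrow> nat set \<Rightarrow> nat \<Rightarrow> bool" where
  "vertical w s t \<longleftrightarrow> (snd (w ! t) \<longleftrightarrow> t \<notin> s)"

definition res_edge :: "bword \<Rightarrow> nat set \<Rightarrow> nat \<times> nat \<Rightarrow> nat \<times> nat \<Rightarrow> bool" where
  "res_edge w s p q \<longleftrightarrow>
     (\<exists>t < length w. let k = fst (w ! t) in
        \<comment> \<open>strands not involved in crossing t, and the vertical (oriented) smoothing\<close>
        (\<exists>x. p = (t, x) \<and> q = (nxt w t, x) \<and> (x \<noteq> k \<and> x \<noteq> k + 1 \<or> vertical w s t))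
        \<comment> \<open>the horizontal smoothing: upper arc at level t, lower arc at level t+1\<close>
      \<or> (\<not> vertical w s t \<and>
          ((p = (t, k) \<and> q = (t, k + 1)) \<or> (p = (nxt w t, k) \<and> q = (nxt w t, k + 1)))))"

definition conn :: "bword \<Rightarrow> nat \<Rightarrow> nat set \<Rightarrow> nat \<times> nat \<Rightarrow> nat \<times> nat \<Rightarrow> bool" where
  "conn w b s = (\<lambda>p q. p \<in> pts w b \<and> q \<in> pts w b \<and> (res_edge w s p q \<or> res_edge w s q p))\<^sup>*\<^sup>*"

definition circle_of :: "bword \<Rightarrow> nat \<Rightarrow> nat set \<Rightarrow> nat \<times> nat \<Rightarrow> (nat \<times> nat) set" where
  "circle_of w b s p = {q \<in> pts w b. conn w b s p q}"

definition circles :: "bword \<Rightarrow> nat \<Rightarrow> nat set \<Rightarrow> (nat \<times> nat) set set" where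
  "circles w b s = circle_of w b s ` pts w b"

(* Khovanov chain complex.  A generator is (s, P): a state s and the set
   P of circles labelled v_+ (all other circles labelled v_-).          *)
type_synonym kgen = "nat set \<times> (nat \<times> nat) set set"

definition kgens :: "bword \<Rightarrow> nat \<Rightarrow> kgen set" where
  "kgens w b = {(s, P). s \<subseteq> {0..<length w} \<and> P \<subseteq> circles w b s}"

(* the generator (s',P') occurs (with coefficient 1) in the image of (s,P)
   under the merge/split map for changing crossing c from 0 to 1, where
   s' = insert c s.  Merge m: v+v+ -> v+, v+v- -> v-, v-v- -> 0;
   split D: v+ -> v+v- + v-v+, v- -> v-v-. *)
definition incident :: "bword \<Rightarrow> nat \<Rightarrow> kgen \<Rightarrow> kgen \<Rightarrow> bool" where
  "incident w b x y \<longleftrightarrow>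
     (let s = fst x; P = snd x; s' = fst y; P' = snd y;
          Old = circles w b s - circles w b s'; New = circles w b s' - circles w b s in
       (\<forall>C \<in> circles w b s \<inter> circles w b s'. C \<in> P \<longleftrightarrow> C \<in> P') \<and>
       ((\<exists>A B C. A \<noteq> B \<and> Old = {A, B} \<and> New = {C} \<and> (A \<in> P \<or> B \<in> P) \<and>
            (C \<in> P' \<longleftrightarrow> A \<in> P \<and> B \<in> P))
        \<or> (\<exists>A C D. C \<noteq> D \<and> Old = {A} \<and> New = {C, D} \<and>
            (if A \<in> P then (C \<in> P') \<noteq> (D \<in> P') else C \<notin> P' \<and> D \<notin> P'))))"

(* matrix coefficient of the Khovanov differential, with the sign
   (-1)^(number of 1-resolved crossings preceding c) *)
definition kh_coeff :: "bword \<Rightarrow> nat \<Rightarrow> kgen \<Rightarrow> kgen \<Rightarrow> int" where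
  "kh_coeff w b x y =
     (\<Sum>c\<in>{0..<length w} - fst x.
        if fst y = insert c (fst x) \<and> incident w b x y
        then (-1) ^ card {c' \<in> fst x. c' < c} else 0)"

(* differential applied to a chain f (a function on generators) *)
definition kh_d :: "bword \<Rightarrow> nat \<Rightarrow> (kgen \<Rightarrow> int) \<Rightarrow> kgen \<Rightarrow> int" where
  "kh_d w b f y = (\<Sum>x\<in>kgens w b. f x * kh_coeff w b x y)"

definition oriented_state :: "bword \<Rightarrow> nat set" where
  "oriented_state w = {t. t < length w \<and> \<not> snd (w ! t)}"

(* Plamenevskaya's generator: all circles of the oriented resolution v_- *)
definition psi_gen :: "bword \<Rightarrow> kgen" where
  "psi_gen w = (oriented_state w, {})"

(* psi(closure of w) = 0 in Kh(;Z): the cycle psi_gen is a boundary *)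
definition psi_vanishes :: "nat \<Rightarrow> bword \<Rightarrow> bool" where
  "psi_vanishes b w \<longleftrightarrow>
     (\<exists>f. \<forall>y\<in>kgens w b. kh_d w b f y = (if y = psi_gen w then 1 else 0))"

(* reduced version over Z/2, marked point (0,q) on level 0:
   the quotient complex has basis the generators whose marked circle is v_+ *)
definition psi'_gen :: "bword \<Rightarrow> nat \<Rightarrow> nat \<Rightarrow> kgen" where
  "psi'_gen w b q = (oriented_state w, {circle_of w b (oriented_state w) (0, q)})"

definition psi'_vanishes :: "nat \<Rightarrow> nat \<Rightarrow> bword \<Rightarrow> bool" where
  "psi'_vanishes b q w \<longleftrightarrow>
     (\<exists>f. \<forall>y\<in>kgens w b. circle_of w b (fst y) (0, q) \<in> snd y \<longrightarrow>
        even (kh_d w b f y - (if y = psi'_gen w b q then 1 else 0)))"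

end

theory Submission
  imports Defs
begin

(* Appending a crossing c to a braid word w and resolving c along the orientation does not
   change the circles of a resolution: each circle only acquires a vertical arc through the
   new level. This embeds the Khovanov complex of w into that of w c as the span of the
   generators in which c carries its oriented resolution, compatibly with the differential
   and with the generators defining psi and psi'. For a negative crossing the oriented
   resolution is the 1-resolution and the span is a subcomplex, so a chain bounding psi(w)
   also bounds psi(w c); for a positive crossing it is the 0-resolution and the span is a
   quotient complex, so restricting a chain bounding psi(w c) bounds psi(w). Hence along
   beta alpha^m the vanishing of psi and psi' is monotone in m, and a monotone sequence of
   truth values is eventually constant. *)

lemma rtranclp_map:
  assumes "r\<^sup>*\<^sup>* x y" and "\<And>x y. r x y \<Longrightarrow> s\<^sup>*\<^sup>* (f x) (f y)"
  shows "s\<^sup>*\<^sup>* (f x) (f y)"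
  using assms(1) by (induction rule: rtranclp_induct) (auto intro: rtranclp_trans assms(2))

lemma nxt_less: "t < length w \<Longrightarrow> nxt w t < length w"
  unfolding nxt_def by (rule mod_less_divisor) linarith

lemma res_edge_levels: "res_edge w s p q \<Longrightarrow> fst p < length w \<and> fst q < length w"
  unfolding res_edge_def using nxt_less by (auto simp: Let_def)

lemma symp_conn_step:
  "symp (\<lambda>p q. p \<in> pts w b \<and> q \<in> pts w b \<and> (res_edge w s p q \<or> res_edge w s q p))"
  by (auto intro: sympI)

lemma conn_sym: "conn w b s p q \<Longrightarrow> conn w b s q p"
  unfolding conn_def using symp_rtranclp[OF symp_conn_step] by (blast dest: sympD)

lemma conn_trans [trans]: "conn w b s p q \<Longrightarrow> conn w b s q r \<Longrightarrow> conn w b s p r"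
  unfolding conn_def by (rule rtranclp_trans)

lemma conn_res_edge:
  "p \<in> pts w b \<Longrightarrow> q \<in> pts w b \<Longrightarrow> res_edge w s p q \<Longrightarrow> conn w b s p q"
  unfolding conn_def by (rule r_into_rtranclp) simp

section \<open>Resolutions of a braid word with one more crossing\<close>

definition extend_state :: "bword \<Rightarrow> bool \<Rightarrow> nat set \<Rightarrow> nat set" where
  "extend_state w e s = (if e then s else insert (length w) s)"

(* In w @ [c] the level length w lies between the last crossing of w and c; when c is
   resolved vertically it is joined straight to level 0, with which it is identified. *)
definition retract_point :: "bword \<Rightarrow> nat \<times> nat \<Rightarrow> nat \<times> nat" where
  "retract_point w p = (if fst p = length w then (0, snd p) else p)"

definition lift_circle :: "bword \<Rightarrow> nat \<Rightarrow> (nat \<times> nat) set \<Rightarrow> (nat \<times> nat) set" where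
  "lift_circle w b C = {q \<in> {0..<Suc (length w)} \<times> {1..b}. retract_point w q \<in> C}"

lemma pts_append_singleton: "pts (w @ [c]) b = {0..<Suc (length w)} \<times> {1..b}"
  by (simp add: pts_def)

lemma retract_point_nxt_append:
  "t < length w \<Longrightarrow> retract_point w (nxt (w @ [c]) t, x) = (nxt w t, x)"
  by (auto simp: retract_point_def nxt_def)

lemma retract_point_in_pts:
  "w \<noteq> [] \<Longrightarrow> p \<in> pts (w @ [c]) b \<Longrightarrow> retract_point w p \<in> pts w b"
  by (cases p) (auto simp: pts_def retract_point_def)

lemma retract_point_id: "p \<in> pts w b \<Longrightarrow> retract_point w p = p"
  by (cases p) (auto simp: pts_def retract_point_def)

lemma in_pts_append_if_retract:
  "retract_point w p \<in> pts w b \<Longrightarrow> fst p < Suc (length w) \<Longrightarrow> p \<in> pts (w @ [c]) b"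
  by (cases p) (auto simp: pts_def retract_point_def split: if_splits)

lemma vertical_extend_state:
  "t < length w \<Longrightarrow> vertical (w @ [c]) (extend_state w e s) t = vertical w s t"
  by (auto simp: vertical_def extend_state_def nth_append)

lemma vertical_extend_state_new:
  "length w \<notin> s \<Longrightarrow> vertical (w @ [c]) (extend_state w (snd c) s) (length w)"
  by (auto simp: vertical_def extend_state_def)

lemma res_edge_append_new_level:
  assumes "length w \<notin> s"
  shows "res_edge (w @ [c]) (extend_state w (snd c) s) (length w, x) (0, x)"
  unfolding res_edge_def
  using vertical_extend_state_new[OF assms, of c] by (intro exI[of _ "length w"]) (simp add: nxt_def)

lemma res_edge_append_retract:
  assumes "length w \<notin> s" and "res_edge (w @ [c]) (extend_state w (snd c) s) p q"
  shows "retract_point w p = retract_point w q \<or> res_edge w s (retract_point w p) (retract_point w q)"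
proof -
  obtain t where t: "t < Suc (length w)" and edge:
    "let k = fst ((w @ [c]) ! t) in
      (\<exists>x. p = (t, x) \<and> q = (nxt (w @ [c]) t, x) \<and>
           (x \<noteq> k \<and> x \<noteq> k + 1 \<or> vertical (w @ [c]) (extend_state w (snd c) s) t))
      \<or> (\<not> vertical (w @ [c]) (extend_state w (snd c) s) t \<and>
          ((p = (t, k) \<and> q = (t, k + 1)) \<or> (p = (nxt (w @ [c]) t, k) \<and> q = (nxt (w @ [c]) t, k + 1))))"
    using assms(2) unfolding res_edge_def by auto
  show ?thesis
  proof (cases "t = length w")
    case True
    then show ?thesis
      using edge vertical_extend_state_new[OF assms(1), of c]
      by (auto simp: Let_def retract_point_def nxt_def)
  next
    case False
    then have "t < length w" using t by simp
    then have "res_edge w s (retract_point w p) (retract_point w q)"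
      unfolding res_edge_def using edge
      by (intro exI[of _ t])
         (auto simp: Let_def nth_append vertical_extend_state retract_point_nxt_append,
          auto simp: retract_point_def)
    then show ?thesis ..
  qed
qed

lemma res_edge_lift:
  assumes "res_edge w s p q"
  shows "\<exists>p' q'. res_edge (w @ [c]) (extend_state w e s) p' q' \<and>
    retract_point w p' = p \<and> retract_point w q' = q"
proof -
  obtain t where t: "t < length w" and edge:
    "let k = fst (w ! t) in
      (\<exists>x. p = (t, x) \<and> q = (nxt w t, x) \<and> (x \<noteq> k \<and> x \<noteq> k + 1 \<or> vertical w s t))
      \<or> (\<not> vertical w s t \<and>
          ((p = (t, k) \<and> q = (t, k + 1)) \<or> (p = (nxt w t, k) \<and> q = (nxt w t, k + 1))))"
    using assms unfolding res_edge_def by auto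
  let ?k = "fst (w ! t)" and ?n = "nxt (w @ [c]) t"
  have edge': "res_edge (w @ [c]) (extend_state w e s) p' q'"
    if "let k = ?k in
      (\<exists>x. p' = (t, x) \<and> q' = (?n, x) \<and> (x \<noteq> k \<and> x \<noteq> k + 1 \<or> vertical w s t))
      \<or> (\<not> vertical w s t \<and> ((p' = (t, k) \<and> q' = (t, k + 1)) \<or> (p' = (?n, k) \<and> q' = (?n, k + 1))))"
    for p' q'
    unfolding res_edge_def using that t
    by (intro exI[of _ t]) (simp add: nth_append vertical_extend_state)
  have retract_t: "retract_point w (t, x) = (t, x)" for x
    using t by (simp add: retract_point_def)
  \<comment> \<open>an edge at crossing t is the same edge of w @ [c], with nxt w t read as nxt (w @ [c]) t\<close>
  show ?thesis
    using edge edge' retract_t retract_point_nxt_append[OF t, of c]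
    by (auto simp: Let_def) metis+
qed

lemma conn_retract_point:
  assumes "length w \<notin> s" and "p \<in> pts (w @ [c]) b"
  shows "conn (w @ [c]) b (extend_state w (snd c) s) p (retract_point w p)"
proof (cases "fst p = length w")
  case True
  then obtain x where p: "p = (length w, x)" by (cases p) auto
  then have "(0, x) \<in> pts (w @ [c]) b" using assms(2) by (simp add: pts_def)
  then show ?thesis
    using conn_res_edge[OF assms(2)] res_edge_append_new_level[OF assms(1)] p
    by (simp add: retract_point_def)
qed (simp add: retract_point_def conn_def)

lemma conn_append_of_res_edge:
  assumes "length w \<notin> s" and "res_edge w s p q" and "p \<in> pts w b" and "q \<in> pts w b"
  shows "conn (w @ [c]) b (extend_state w (snd c) s) p q"
proof -
  obtain p' q' where e: "res_edge (w @ [c]) (extend_state w (snd c) s) p' q'"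
    and p': "retract_point w p' = p" and q': "retract_point w q' = q"
    using res_edge_lift[OF assms(2)] by blast
  have pts': "p' \<in> pts (w @ [c]) b" "q' \<in> pts (w @ [c]) b"
    using in_pts_append_if_retract res_edge_levels[OF e] assms(3,4) p' q' by auto
  have "conn (w @ [c]) b (extend_state w (snd c) s) p p'"
    using conn_sym conn_retract_point[OF assms(1) pts'(1)] p' by simp
  also have "conn (w @ [c]) b (extend_state w (snd c) s) p' q'"
    using conn_res_edge[OF pts' e] .
  also have "conn (w @ [c]) b (extend_state w (snd c) s) q' q"
    using conn_retract_point[OF assms(1) pts'(2)] q' by simp
  finally show ?thesis .
qed

lemma conn_append_iff:
  assumes "w \<noteq> []" and "length w \<notin> s" and p: "p \<in> pts (w @ [c]) b" and q: "q \<in> pts (w @ [c]) b"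
  shows "conn (w @ [c]) b (extend_state w (snd c) s) p q
    \<longleftrightarrow> conn w b s (retract_point w p) (retract_point w q)"
    (is "?conn' p q \<longleftrightarrow> _")
proof
  assume "?conn' p q"
  then show "conn w b s (retract_point w p) (retract_point w q)"
    unfolding conn_def
  proof (rule rtranclp_map)
    fix x y
    assume "x \<in> pts (w @ [c]) b \<and> y \<in> pts (w @ [c]) b \<and>
      (res_edge (w @ [c]) (extend_state w (snd c) s) x y \<or> res_edge (w @ [c]) (extend_state w (snd c) s) y x)"
    then show "(\<lambda>p q. p \<in> pts w b \<and> q \<in> pts w b \<and> (res_edge w s p q \<or> res_edge w s q p))\<^sup>*\<^sup>*
        (retract_point w x) (retract_point w y)"
      using res_edge_append_retract[OF assms(2)] retract_point_in_pts[OF assms(1)]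
      by (smt (verit) r_into_rtranclp rtranclp.rtrancl_refl)
  qed
next
  assume "conn w b s (retract_point w p) (retract_point w q)"
  then have "?conn' (retract_point w p) (retract_point w q)"
    unfolding conn_def[of w]
  proof (induction rule: rtranclp_induct)
    case base
    show ?case by (simp add: conn_def)
  next
    case (step y z)
    then have "?conn' y z"
      using conn_append_of_res_edge[OF assms(2)] conn_sym by blast
    with step.IH show ?case by (rule conn_trans)
  qed
  then have "?conn' p (retract_point w q)"
    using conn_trans conn_retract_point[OF assms(2) p] by blast
  then show "?conn' p q"
    using conn_trans conn_sym conn_retract_point[OF assms(2) q] by blast
qed

lemma circle_of_append:
  assumes "w \<noteq> []" and "length w \<notin> s" and "p \<in> pts (w @ [c]) b"
  shows "circle_of (w @ [c]) b (extend_state w (snd c) s) p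
    = lift_circle w b (circle_of w b s (retract_point w p))"
  unfolding circle_of_def lift_circle_def
  using conn_append_iff[OF assms] retract_point_in_pts[OF assms(1), of _ c b]
    pts_append_singleton[of w c b, symmetric]
  by auto

lemma retract_point_image:
  assumes "w \<noteq> []" shows "retract_point w ` pts (w @ [c]) b = pts w b"
proof
  show "pts w b \<subseteq> retract_point w ` pts (w @ [c]) b"
  proof
    fix p assume "p \<in> pts w b"
    moreover have "p \<in> pts (w @ [c]) b"
      using \<open>p \<in> pts w b\<close> by (auto simp: pts_def)
    ultimately show "p \<in> retract_point w ` pts (w @ [c]) b"
      using retract_point_id by (metis image_eqI)
  qed
qed (use retract_point_in_pts[OF assms] in blast)

lemma circles_append:
  assumes "w \<noteq> []" and "length w \<notin> s"
  shows "circles (w @ [c]) b (extend_state w (snd c) s) = lift_circle w b ` circles w b s"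
proof -
  have "circles (w @ [c]) b (extend_state w (snd c) s)
      = lift_circle w b ` circle_of w b s ` retract_point w ` pts (w @ [c]) b"
    unfolding circles_def image_image using circle_of_append[OF assms] by (simp cong: image_cong)
  then show ?thesis
    by (simp only: retract_point_image[OF assms(1)] circles_def)
qed

lemma circles_subset_Pow_pts: "circles w b s \<subseteq> Pow (pts w b)"
  unfolding circles_def circle_of_def by auto

lemma inj_on_lift_circle: "inj_on (lift_circle w b) (Pow (pts w b))"
proof (rule inj_on_inverseI)
  show "lift_circle w b C \<inter> pts w b = C" if "C \<in> Pow (pts w b)" for C
    using that by (auto simp: lift_circle_def pts_def retract_point_def)
qed

section \<open>Merge and split maps under relabelling of circles\<close>

definition merge_split_incident :: "'a set \<Rightarrow> 'a set \<Rightarrow> 'a set \<Rightarrow> 'a set \<Rightarrow> bool" where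
  "merge_split_incident X P X' P' \<longleftrightarrow>
     (let Old = X - X'; New = X' - X in
       (\<forall>C \<in> X \<inter> X'. C \<in> P \<longleftrightarrow> C \<in> P') \<and>
       ((\<exists>A B C. A \<noteq> B \<and> Old = {A, B} \<and> New = {C} \<and> (A \<in> P \<or> B \<in> P) \<and>
            (C \<in> P' \<longleftrightarrow> A \<in> P \<and> B \<in> P))
        \<or> (\<exists>A C D. C \<noteq> D \<and> Old = {A} \<and> New = {C, D} \<and>
            (if A \<in> P then (C \<in> P') \<noteq> (D \<in> P') else C \<notin> P' \<and> D \<notin> P'))))"

lemma incident_eq_merge_split_incident:
  "incident w b x y =
    merge_split_incident (circles w b (fst x)) (snd x) (circles w b (fst y)) (snd y)"
  unfolding incident_def merge_split_incident_def Let_def ..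

lemma merge_split_incident_image:
  assumes incident: "merge_split_incident X P X' P'"
    and f: "inj_on f U" and sub: "X \<subseteq> U" "X' \<subseteq> U" "P \<subseteq> U" "P' \<subseteq> U"
  shows "merge_split_incident (f ` X) (f ` P) (f ` X') (f ` P')"
proof -
  have diff: "f ` X - f ` X' = f ` (X - X')" "f ` X' - f ` X = f ` (X' - X)"
    using inj_on_image_set_diff[OF f, of X X'] inj_on_image_set_diff[OF f, of X' X] sub by auto
  have int: "f ` X \<inter> f ` X' = f ` (X \<inter> X')"
    by (rule inj_on_image_Int[OF f sub(1,2), symmetric])
  have mem: "f A \<in> f ` P \<longleftrightarrow> A \<in> P" "f A \<in> f ` P' \<longleftrightarrow> A \<in> P'" if "A \<in> U" for A
    using that sub inj_on_image_mem_iff[OF f] by auto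
  have "\<forall>C \<in> X \<inter> X'. C \<in> P \<longleftrightarrow> C \<in> P'"
    using incident unfolding merge_split_incident_def Let_def by simp
  then have common: "\<forall>C' \<in> f ` (X \<inter> X'). C' \<in> f ` P \<longleftrightarrow> C' \<in> f ` P'"
    using sub by (simp add: mem subset_iff)
  consider (merge) A B C where "A \<noteq> B" "X - X' = {A, B}" "X' - X = {C}" "A \<in> P \<or> B \<in> P"
      "C \<in> P' \<longleftrightarrow> A \<in> P \<and> B \<in> P"
    | (split) A C D where "C \<noteq> D" "X - X' = {A}" "X' - X = {C, D}"
      "if A \<in> P then (C \<in> P') \<noteq> (D \<in> P') else C \<notin> P' \<and> D \<notin> P'"
    using incident unfolding merge_split_incident_def Let_def by (elim conjE disjE exE) metis+
  then show ?thesis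
  proof cases
    case merge
    then have "A \<in> U" "B \<in> U" "C \<in> U"
      using sub by auto
    then have images: "f A \<noteq> f B" "f ` (X - X') = {f A, f B}" "f ` (X' - X) = {f C}"
        "f A \<in> f ` P \<or> f B \<in> f ` P" "f C \<in> f ` P' \<longleftrightarrow> f A \<in> f ` P \<and> f B \<in> f ` P"
      using merge mem inj_on_eq_iff[OF f] by simp_all
    show ?thesis
      unfolding merge_split_incident_def Let_def diff int
      by (intro conjI common disjI1, rule exI[of _ "f A"], rule exI[of _ "f B"], rule exI[of _ "f C"])
        (simp add: images)
  next
    case split
    then have "A \<in> U" "C \<in> U" "D \<in> U"
      using sub by auto
    then have images: "f C \<noteq> f D" "f ` (X - X') = {f A}" "f ` (X' - X) = {f C, f D}"
        "if f A \<in> f ` P then (f C \<in> f ` P') \<noteq> (f D \<in> f ` P') else f C \<notin> f ` P' \<and> f D \<notin> f ` P'"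
      using split mem inj_on_eq_iff[OF f] by simp_all
    show ?thesis
      unfolding merge_split_incident_def Let_def diff int
      by (intro conjI common disjI2, rule exI[of _ "f A"], rule exI[of _ "f C"], rule exI[of _ "f D"])
        (simp add: images)
  qed
qed

lemma merge_split_incident_image_iff:
  assumes f: "inj_on f U" and sub: "X \<subseteq> U" "X' \<subseteq> U" "P \<subseteq> U" "P' \<subseteq> U"
  shows "merge_split_incident (f ` X) (f ` P) (f ` X') (f ` P') \<longleftrightarrow> merge_split_incident X P X' P'"
proof
  assume "merge_split_incident (f ` X) (f ` P) (f ` X') (f ` P')"
  then have "merge_split_incident (inv_into U f ` f ` X) (inv_into U f ` f ` P)
      (inv_into U f ` f ` X') (inv_into U f ` f ` P')"
    by (rule merge_split_incident_image[OF _ inj_on_inv_into[OF subset_refl]]) (use sub in auto)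
  then show "merge_split_incident X P X' P'"
    by (simp only: inv_into_image_cancel[OF f sub(1)] inv_into_image_cancel[OF f sub(2)]
        inv_into_image_cancel[OF f sub(3)] inv_into_image_cancel[OF f sub(4)])
next
  assume "merge_split_incident X P X' P'"
  then show "merge_split_incident (f ` X) (f ` P) (f ` X') (f ` P')"
    by (rule merge_split_incident_image[OF _ f sub])
qed

section \<open>The Khovanov complex of w inside that of w @ [c]\<close>

definition lift_gen :: "bword \<Rightarrow> bool \<Rightarrow> nat \<Rightarrow> kgen \<Rightarrow> kgen" where
  "lift_gen w e b x = (extend_state w e (fst x), lift_circle w b ` snd x)"

lemma kgens_iff: "x \<in> kgens w b \<longleftrightarrow> fst x \<subseteq> {0..<length w} \<and> snd x \<subseteq> circles w b (fst x)"
  by (cases x) (simp add: kgens_def)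

lemma length_notin_kgens_state: "x \<in> kgens w b \<Longrightarrow> length w \<notin> fst x"
  by (auto simp: kgens_iff)

lemma kgens_labels_subset: "x \<in> kgens w b \<Longrightarrow> snd x \<subseteq> Pow (pts w b)"
  by (meson kgens_iff circles_subset_Pow_pts subset_trans)

lemma finite_kgens: "finite (kgens w b)"
proof (rule finite_subset)
  show "kgens w b \<subseteq> Pow {0..<length w} \<times> Pow (Pow (pts w b))"
  proof
    fix x assume "x \<in> kgens w b"
    then show "x \<in> Pow {0..<length w} \<times> Pow (Pow (pts w b))"
      using kgens_labels_subset[of x w b] by (cases x) (simp add: kgens_iff)
  qed
  show "finite (Pow {0..<length w} \<times> Pow (Pow (pts w b)))"
    by (simp add: pts_def)
qed

lemma lift_gen_in_kgens:
  assumes "w \<noteq> []" and "x \<in> kgens w b"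
  shows "lift_gen w (snd c) b x \<in> kgens (w @ [c]) b"
  using assms(2) circles_append[OF assms(1) length_notin_kgens_state[OF assms(2)], of c b]
  by (auto simp: kgens_iff lift_gen_def extend_state_def)

lemma inj_on_lift_gen: "inj_on (lift_gen w e b) (kgens w b)"
proof (rule inj_onI)
  fix x y assume x: "x \<in> kgens w b" and y: "y \<in> kgens w b"
    and eq: "lift_gen w e b x = lift_gen w e b y"
  have "fst x = fst y"
    using eq length_notin_kgens_state[OF x] length_notin_kgens_state[OF y]
    by (cases e) (auto simp: lift_gen_def extend_state_def insert_ident)
  moreover have "snd x = snd y"
    using eq inj_on_image_Pow[OF inj_on_lift_circle] kgens_labels_subset[OF x] kgens_labels_subset[OF y]
    by (auto simp: lift_gen_def dest: inj_onD)
  ultimately show "x = y" by (simp add: prod_eq_iff)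
qed

lemma lift_gen_surj:
  assumes "w \<noteq> []" and "y \<in> kgens (w @ [c]) b" and "length w \<in> fst y \<longleftrightarrow> \<not> snd c"
  obtains x where "x \<in> kgens w b" and "y = lift_gen w (snd c) b x"
proof -
  define s where "s = fst y - {length w}"
  have s: "length w \<notin> s" "extend_state w (snd c) s = fst y" "s \<subseteq> {0..<length w}"
    using assms(2,3) by (auto simp: s_def extend_state_def kgens_iff)
  define P where "P = {C \<in> circles w b s. lift_circle w b C \<in> snd y}"
  have "lift_circle w b ` P = snd y"
    using assms(2) circles_append[OF assms(1) s(1), of c b] s(2)
    by (auto simp: P_def kgens_iff)
  moreover have "(s, P) \<in> kgens w b"
    using s(3) by (auto simp: kgens_def P_def)
  ultimately show ?thesis
    using s(2) that[of "(s, P)"] by (simp add: lift_gen_def prod_eq_iff)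
qed

lemma incident_lift_gen:
  assumes "w \<noteq> []" and "x \<in> kgens w b" and "y \<in> kgens w b"
  shows "incident (w @ [c]) b (lift_gen w (snd c) b x) (lift_gen w (snd c) b y) = incident w b x y"
  unfolding incident_eq_merge_split_incident lift_gen_def fst_conv snd_conv
    circles_append[OF assms(1) length_notin_kgens_state[OF assms(2)]]
    circles_append[OF assms(1) length_notin_kgens_state[OF assms(3)]]
  by (rule merge_split_incident_image_iff[OF inj_on_lift_circle circles_subset_Pow_pts
        circles_subset_Pow_pts kgens_labels_subset[OF assms(2)] kgens_labels_subset[OF assms(3)]])

lemma extend_state_eq_insert_iff:
  assumes "length w \<notin> s" and "length w \<notin> s'" and "i \<noteq> length w"
  shows "extend_state w e s' = insert i (extend_state w e s) \<longleftrightarrow> s' = insert i s"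
  using assms insert_ident[of "length w" s' "insert i s"]
  by (cases e) (auto simp: extend_state_def insert_commute)

lemma kh_coeff_eq_0: "(\<And>i. fst y \<noteq> insert i (fst x)) \<Longrightarrow> kh_coeff w b x y = 0"
  by (simp add: kh_coeff_def)

lemma kh_coeff_lift_gen:
  assumes "w \<noteq> []" and x: "x \<in> kgens w b" and y: "y \<in> kgens w b"
  shows "kh_coeff (w @ [c]) b (lift_gen w (snd c) b x) (lift_gen w (snd c) b y) = kh_coeff w b x y"
proof -
  let ?x = "lift_gen w (snd c) b x" and ?y = "lift_gen w (snd c) b y"
  let ?g = "\<lambda>i. if fst ?y = insert i (fst ?x) \<and> incident (w @ [c]) b ?x ?y
    then (-1::int) ^ card {i' \<in> fst ?x. i' < i} else 0"
  let ?h = "\<lambda>i. if fst y = insert i (fst x) \<and> incident w b x y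
    then (-1::int) ^ card {i' \<in> fst x. i' < i} else 0"
  have nx: "length w \<notin> fst x" and ny: "length w \<notin> fst y"
    using length_notin_kgens_state x y by auto
  have "sum ?g ({0..<length (w @ [c])} - fst ?x) = sum ?h ({0..<length w} - fst x)"
  proof (rule sum.mono_neutral_cong_right)
    show "{0..<length w} - fst x \<subseteq> {0..<length (w @ [c])} - fst ?x"
      by (auto simp: lift_gen_def extend_state_def)
    show "\<forall>i \<in> {0..<length (w @ [c])} - fst ?x - ({0..<length w} - fst x). ?g i = 0"
    proof
      fix i assume "i \<in> {0..<length (w @ [c])} - fst ?x - ({0..<length w} - fst x)"
      then have "i = length w" "snd c"
        by (auto simp: lift_gen_def extend_state_def split: if_splits)
      then have "fst ?y \<noteq> insert i (fst ?x)"
        using ny by (auto simp: lift_gen_def extend_state_def)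
      then show "?g i = 0" by simp
    qed
    show "?g i = ?h i" if "i \<in> {0..<length w} - fst x" for i
    proof -
      have "fst ?y = insert i (fst ?x) \<longleftrightarrow> fst y = insert i (fst x)"
        using extend_state_eq_insert_iff[OF nx ny] that by (simp add: lift_gen_def)
      moreover have "{i' \<in> fst ?x. i' < i} = {i' \<in> fst x. i' < i}"
        using that by (auto simp: lift_gen_def extend_state_def)
      ultimately show ?thesis
        by (simp only: incident_lift_gen[OF assms])
    qed
  qed simp
  then show ?thesis
    by (simp only: kh_coeff_def)
qed

definition push_chain :: "bword \<Rightarrow> bool \<Rightarrow> nat \<Rightarrow> (kgen \<Rightarrow> int) \<Rightarrow> kgen \<Rightarrow> int" where
  "push_chain w e b f y =
    (if y \<in> lift_gen w e b ` kgens w b then f (the_inv_into (kgens w b) (lift_gen w e b) y) else 0)"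

lemma kh_d_push_chain:
  assumes "w \<noteq> []"
  shows "kh_d (w @ [c]) b (push_chain w (snd c) b f) y
    = (\<Sum>x\<in>kgens w b. f x * kh_coeff (w @ [c]) b (lift_gen w (snd c) b x) y)"
proof -
  let ?lift = "lift_gen w (snd c) b"
  have "kh_d (w @ [c]) b (push_chain w (snd c) b f) y
      = (\<Sum>x'\<in>?lift ` kgens w b. push_chain w (snd c) b f x' * kh_coeff (w @ [c]) b x' y)"
    unfolding kh_d_def
    by (rule sum.mono_neutral_right[OF finite_kgens])
      (use lift_gen_in_kgens[OF assms, where c = c] in \<open>auto simp: push_chain_def\<close>)
  also have "\<dots> = (\<Sum>x\<in>kgens w b. f x * kh_coeff (w @ [c]) b (?lift x) y)"
    by (simp add: sum.reindex[OF inj_on_lift_gen] push_chain_def the_inv_into_f_f[OF inj_on_lift_gen])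
  finally show ?thesis .
qed

lemma kh_d_push_chain_lift_gen:
  assumes "w \<noteq> []" and "y \<in> kgens w b"
  shows "kh_d (w @ [c]) b (push_chain w (snd c) b f) (lift_gen w (snd c) b y) = kh_d w b f y"
proof -
  have "kh_d (w @ [c]) b (push_chain w (snd c) b f) (lift_gen w (snd c) b y)
      = (\<Sum>x\<in>kgens w b. f x * kh_coeff (w @ [c]) b (lift_gen w (snd c) b x) (lift_gen w (snd c) b y))"
    by (rule kh_d_push_chain[OF assms(1)])
  also have "\<dots> = kh_d w b f y"
    unfolding kh_d_def using kh_coeff_lift_gen[OF assms(1) _ assms(2)] by simp
  finally show ?thesis .
qed

lemma kh_d_push_chain_outside:
  assumes "w \<noteq> []" and "\<not> snd c" and "length w \<notin> fst y"
  shows "kh_d (w @ [c]) b (push_chain w (snd c) b f) y = 0"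
proof -
  have "kh_coeff (w @ [c]) b (lift_gen w (snd c) b x) y = 0" for x
    by (rule kh_coeff_eq_0) (use assms(2,3) in \<open>auto simp: lift_gen_def extend_state_def\<close>)
  then show ?thesis
    by (simp add: kh_d_push_chain[OF assms(1)])
qed

lemma kh_d_comp_lift_gen:
  assumes "w \<noteq> []" and "snd c" and y: "y \<in> kgens w b"
  shows "kh_d w b (f \<circ> lift_gen w (snd c) b) y = kh_d (w @ [c]) b f (lift_gen w (snd c) b y)"
proof -
  let ?lift = "lift_gen w (snd c) b"
  have "kh_d (w @ [c]) b f (?lift y) = (\<Sum>x'\<in>?lift ` kgens w b. f x' * kh_coeff (w @ [c]) b x' (?lift y))"
    unfolding kh_d_def
  proof (rule sum.mono_neutral_right[OF finite_kgens])
    show "?lift ` kgens w b \<subseteq> kgens (w @ [c]) b"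
      using lift_gen_in_kgens[OF assms(1)] by blast
    show "\<forall>x'\<in>kgens (w @ [c]) b - ?lift ` kgens w b. f x' * kh_coeff (w @ [c]) b x' (?lift y) = 0"
    proof
      fix x' assume x': "x' \<in> kgens (w @ [c]) b - ?lift ` kgens w b"
      then have "length w \<in> fst x'"
        using lift_gen_surj[OF assms(1), of x' c b] assms(2) by blast
      moreover have "length w \<notin> fst (?lift y)"
        using length_notin_kgens_state[OF y] assms(2) by (simp add: lift_gen_def extend_state_def)
      \<comment> \<open>x' 1-resolves c, ?lift y 0-resolves it, and the differential only adds 1-resolutions\<close>
      ultimately have "kh_coeff (w @ [c]) b x' (?lift y) = 0"
        by (intro kh_coeff_eq_0) auto
      then show "f x' * kh_coeff (w @ [c]) b x' (?lift y) = 0" by simp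
    qed
  qed
  also have "\<dots> = kh_d w b (f \<circ> ?lift) y"
    unfolding kh_d_def
    using kh_coeff_lift_gen[OF assms(1) _ y] by (simp add: sum.reindex[OF inj_on_lift_gen])
  finally show ?thesis ..
qed

definition kh_solvable :: "bword \<Rightarrow> nat \<Rightarrow> (kgen \<Rightarrow> int \<Rightarrow> bool) \<Rightarrow> bool" where
  "kh_solvable w b T \<longleftrightarrow> (\<exists>f. \<forall>y\<in>kgens w b. T y (kh_d w b f y))"

lemma kh_solvable_append_negative:
  assumes "w \<noteq> []" and "\<not> snd c" and "kh_solvable w b T"
    and lift: "\<And>y. y \<in> kgens w b \<Longrightarrow> T' (lift_gen w (snd c) b y) = T y"
    and outside: "\<And>y'. y' \<in> kgens (w @ [c]) b \<Longrightarrow> length w \<notin> fst y' \<Longrightarrow> T' y' 0"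
  shows "kh_solvable (w @ [c]) b T'"
proof -
  obtain f where f: "\<forall>y\<in>kgens w b. T y (kh_d w b f y)"
    using assms(3) by (auto simp: kh_solvable_def)
  have "T' y' (kh_d (w @ [c]) b (push_chain w (snd c) b f) y')" if y': "y' \<in> kgens (w @ [c]) b" for y'
  proof (cases "length w \<in> fst y'")
    case True
    then obtain y where "y \<in> kgens w b" "y' = lift_gen w (snd c) b y"
      using lift_gen_surj[OF assms(1) y'] assms(2) by blast
    then show ?thesis
      using f lift kh_d_push_chain_lift_gen[OF assms(1)] by simp
  next
    case False
    then show ?thesis
      using outside[OF y'] kh_d_push_chain_outside[OF assms(1,2)] by simp
  qed
  then show ?thesis
    unfolding kh_solvable_def by blast
qed

lemma kh_solvable_append_positive:
  assumes "w \<noteq> []" and "snd c" and "kh_solvable (w @ [c]) b T'"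
    and lift: "\<And>y. y \<in> kgens w b \<Longrightarrow> T' (lift_gen w (snd c) b y) = T y"
  shows "kh_solvable w b T"
proof -
  obtain f where f: "\<forall>y'\<in>kgens (w @ [c]) b. T' y' (kh_d (w @ [c]) b f y')"
    using assms(3) by (auto simp: kh_solvable_def)
  have "T y (kh_d w b (f \<circ> lift_gen w (snd c) b) y)" if y: "y \<in> kgens w b" for y
  proof -
    have "T' (lift_gen w (snd c) b y) (kh_d (w @ [c]) b f (lift_gen w (snd c) b y))"
      using f lift_gen_in_kgens[OF assms(1) y] by blast
    then show ?thesis
      using lift[OF y] kh_d_comp_lift_gen[OF assms(1,2) y] by simp
  qed
  then show ?thesis
    unfolding kh_solvable_def by blast
qed

section \<open>Plamenevskaya's classes\<close>

lemma oriented_state_append: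
  "oriented_state (w @ [c]) = extend_state w (snd c) (oriented_state w)"
  by (auto simp: oriented_state_def extend_state_def nth_append less_Suc_eq)

lemma length_notin_oriented_state: "length w \<notin> oriented_state w"
  by (simp add: oriented_state_def)

lemma oriented_state_in_kgens:
  "(oriented_state w, P) \<in> kgens w b \<longleftrightarrow> P \<subseteq> circles w b (oriented_state w)"
  by (auto simp: kgens_def oriented_state_def)

lemma circle_of_append_level_0:
  assumes "w \<noteq> []" and "q \<in> {1..b}" and "length w \<notin> s"
  shows "circle_of (w @ [c]) b (extend_state w (snd c) s) (0, q)
    = lift_circle w b (circle_of w b s (0, q))"
proof -
  have "(0, q) \<in> pts (w @ [c]) b" "retract_point w (0, q) = (0, q)"
    using assms(1,2) by (auto simp: pts_def retract_point_def)
  then show ?thesis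
    using circle_of_append[OF assms(1,3)] by simp
qed

lemma lift_gen_eq_psi_gen_iff:
  assumes "y \<in> kgens w b"
  shows "lift_gen w (snd c) b y = psi_gen (w @ [c]) \<longleftrightarrow> y = psi_gen w"
proof -
  have "lift_gen w (snd c) b (psi_gen w) = psi_gen (w @ [c])"
    by (simp add: lift_gen_def psi_gen_def oriented_state_append)
  moreover have "psi_gen w \<in> kgens w b"
    by (simp add: psi_gen_def oriented_state_in_kgens)
  ultimately show ?thesis
    using inj_on_eq_iff[OF inj_on_lift_gen assms] by metis
qed

lemma lift_gen_eq_psi'_gen_iff:
  assumes "w \<noteq> []" and q: "q \<in> {1..b}" and "y \<in> kgens w b"
  shows "lift_gen w (snd c) b y = psi'_gen (w @ [c]) b q \<longleftrightarrow> y = psi'_gen w b q"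
proof -
  have "lift_gen w (snd c) b (psi'_gen w b q) = psi'_gen (w @ [c]) b q"
    using circle_of_append_level_0[OF assms(1,2) length_notin_oriented_state]
    by (simp add: lift_gen_def psi'_gen_def oriented_state_append)
  moreover have "psi'_gen w b q \<in> kgens w b"
    using assms(1,2) by (auto simp: psi'_gen_def oriented_state_in_kgens circles_def pts_def)
  ultimately show ?thesis
    using inj_on_eq_iff[OF inj_on_lift_gen assms(3)] by metis
qed

lemma marked_circle_lift_gen_iff:
  assumes "w \<noteq> []" and "q \<in> {1..b}" and y: "y \<in> kgens w b"
  shows "circle_of (w @ [c]) b (fst (lift_gen w (snd c) b y)) (0, q) \<in> snd (lift_gen w (snd c) b y)
    \<longleftrightarrow> circle_of w b (fst y) (0, q) \<in> snd y"
proof -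
  have "circle_of w b (fst y) (0, q) \<in> Pow (pts w b)"
    by (auto simp: circle_of_def)
  then show ?thesis
    using circle_of_append_level_0[OF assms(1,2) length_notin_kgens_state[OF y]]
      inj_on_image_mem_iff[OF inj_on_lift_circle _ kgens_labels_subset[OF y]]
    by (simp add: lift_gen_def)
qed

lemma psi_vanishes_iff_kh_solvable:
  "psi_vanishes b w \<longleftrightarrow> kh_solvable w b (\<lambda>y v. v = (if y = psi_gen w then 1 else 0))"
  by (simp add: psi_vanishes_def kh_solvable_def)

lemma psi'_vanishes_iff_kh_solvable:
  "psi'_vanishes b q w \<longleftrightarrow> kh_solvable w b (\<lambda>y v. circle_of w b (fst y) (0, q) \<in> snd y \<longrightarrow>
     even (v - (if y = psi'_gen w b q then 1 else 0)))"
  by (simp add: psi'_vanishes_def kh_solvable_def)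

lemma psi_vanishes_append_negative:
  assumes "w \<noteq> []" and "\<not> snd c" and "psi_vanishes b w"
  shows "psi_vanishes b (w @ [c])"
  using assms(3) unfolding psi_vanishes_iff_kh_solvable
proof (rule kh_solvable_append_negative[OF assms(1,2)])
  show "length w \<notin> fst y' \<Longrightarrow> 0 = (if y' = psi_gen (w @ [c]) then 1 else 0)" for y'
    using assms(2) by (auto simp: psi_gen_def oriented_state_def)
qed (simp add: lift_gen_eq_psi_gen_iff)

lemma psi_vanishes_append_positive:
  assumes "w \<noteq> []" and "snd c" and "psi_vanishes b (w @ [c])"
  shows "psi_vanishes b w"
  using assms(3) unfolding psi_vanishes_iff_kh_solvable
  by (rule kh_solvable_append_positive[OF assms(1,2)]) (simp add: lift_gen_eq_psi_gen_iff)

lemma psi'_vanishes_append_negative: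
  assumes "q \<in> {1..b}" and "w \<noteq> []" and "\<not> snd c" and "psi'_vanishes b q w"
  shows "psi'_vanishes b q (w @ [c])"
  using assms(4) unfolding psi'_vanishes_iff_kh_solvable
proof (rule kh_solvable_append_negative[OF assms(2,3)])
  show "(circle_of (w @ [c]) b (fst y') (0, q) \<in> snd y' \<longrightarrow>
      even (0 - (if y' = psi'_gen (w @ [c]) b q then 1 else 0 :: int)))"
    if "length w \<notin> fst y'" for y'
    using that assms(3) by (auto simp: psi'_gen_def oriented_state_def)
qed (simp add: lift_gen_eq_psi'_gen_iff[OF assms(2,1)] marked_circle_lift_gen_iff[OF assms(2,1)])

lemma psi'_vanishes_append_positive:
  assumes "q \<in> {1..b}" and "w \<noteq> []" and "snd c" and "psi'_vanishes b q (w @ [c])"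
  shows "psi'_vanishes b q w"
  using assms(4) unfolding psi'_vanishes_iff_kh_solvable
  by (rule kh_solvable_append_positive[OF assms(2,3)])
    (simp add: lift_gen_eq_psi'_gen_iff[OF assms(2,1)] marked_circle_lift_gen_iff[OF assms(2,1)])

section \<open>Stabilization\<close>

lemma append_closed_if_snoc_closed:
  assumes step: "\<And>w c. w \<noteq> [] \<Longrightarrow> c \<in> L \<Longrightarrow> P w \<Longrightarrow> P (w @ [c])"
    and "w \<noteq> []" and "set u \<subseteq> L" and "P w"
  shows "P (w @ u)"
  using assms(3)
proof (induction u rule: rev_induct)
  case Nil
  then show ?case using assms(4) by simp
next
  case (snoc c u)
  then show ?case
    using step[of "w @ u" c] assms(2) by simp
qed

lemma concat_replicate_Suc: "concat (replicate (Suc m) u) = concat (replicate m u) @ u"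
  by (induction m) auto

lemma eventually_eq_Suc_if_mono:
  fixes A :: "nat \<Rightarrow> bool"
  assumes mono: "\<And>m. k \<le> m \<Longrightarrow> A m \<Longrightarrow> A (Suc m)"
  shows "eventually (\<lambda>m. A m = A (Suc m)) sequentially"
proof (cases "\<exists>m\<^sub>0\<ge>k. A m\<^sub>0")
  case True
  then obtain m\<^sub>0 where "k \<le> m\<^sub>0" "A m\<^sub>0" by blast
  have "A m" if "m\<^sub>0 \<le> m" for m
    using that
  proof (induction m rule: dec_induct)
    case (step m)
    then show ?case using mono \<open>k \<le> m\<^sub>0\<close> by simp
  qed (fact \<open>A m\<^sub>0\<close>)
  then show ?thesis
    unfolding eventually_sequentially by (intro exI[of _ m\<^sub>0]) simp
next
  case False
  then show ?thesis
    unfolding eventually_sequentially by (intro exI[of _ k]) simp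
qed

lemma eventually_stable_if_snoc_closed:
  assumes step: "\<And>w c. w \<noteq> [] \<Longrightarrow> c \<in> set u \<Longrightarrow> P w \<Longrightarrow> P (w @ [c])" and "u \<noteq> []"
  shows "eventually (\<lambda>m. P (v @ concat (replicate m u)) = P (v @ concat (replicate (Suc m) u)))
    sequentially"
proof (rule eventually_eq_Suc_if_mono[where k = 1])
  fix m :: nat
  assume "1 \<le> m" and P_m: "P (v @ concat (replicate m u))"
  have nonempty: "v @ concat (replicate m u) \<noteq> []"
    using \<open>1 \<le> m\<close> \<open>u \<noteq> []\<close> by (cases m) auto
  have "P ((v @ concat (replicate m u)) @ u)"
    by (rule append_closed_if_snoc_closed[where L = "set u"]) (use step nonempty P_m in blast)+
  then show "P (v @ concat (replicate (Suc m) u))"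
    by (simp only: concat_replicate_Suc append_assoc)
qed

lemma eventually_stable_along_powers:
  fixes P :: "bword \<Rightarrow> bool"
  assumes neg: "\<And>w c. w \<noteq> [] \<Longrightarrow> \<not> snd c \<Longrightarrow> P w \<Longrightarrow> P (w @ [c])"
    and pos: "\<And>w c. w \<noteq> [] \<Longrightarrow> snd c \<Longrightarrow> P (w @ [c]) \<Longrightarrow> P w"
    and "u \<noteq> []" and sign: "\<forall>c \<in> set u. snd c = e"
  shows "eventually (\<lambda>m. P (v @ concat (replicate m u)) = P (v @ concat (replicate (Suc m) u)))
    sequentially"
proof (cases e)
  case True
  have "eventually (\<lambda>m. (\<not> P (v @ concat (replicate m u))) = (\<not> P (v @ concat (replicate (Suc m) u))))
      sequentially"
    by (rule eventually_stable_if_snoc_closed[OF _ \<open>u \<noteq> []\<close>]) (use pos sign True in blast)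
  then show ?thesis by simp
next
  case False
  show ?thesis
    by (rule eventually_stable_if_snoc_closed[OF _ \<open>u \<noteq> []\<close>]) (use neg sign False in blast)
qed

theorem theorem1p5:
  fixes b a i :: nat and \<beta> :: bword and e :: bool
  assumes "braid_word b \<beta>"
    and "2 \<le> a" and "a < b" and "1 \<le> i" and "i \<le> b - a + 1"
  shows "\<exists>N. \<forall>m>N.
     (psi_vanishes b (\<beta> @ concat (replicate m (full_twist a i e)))
        \<longleftrightarrow> psi_vanishes b (\<beta> @ concat (replicate (Suc m) (full_twist a i e))))
   \<and> (\<forall>q\<in>{1..b}. psi'_vanishes b q (\<beta> @ concat (replicate m (full_twist a i e)))
        \<longleftrightarrow> psi'_vanishes b q (\<beta> @ concat (replicate (Suc m) (full_twist a i e))))"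
proof -
  \<comment> \<open>only 2 \<le> a is used (the twist is nonempty): the monotonicity holds for every braid word\<close>
  have twist: "full_twist a i e \<noteq> []" "\<forall>c \<in> set (full_twist a i e). snd c = e"
    using assms(2) by (cases a) (auto simp: full_twist_def)
  have psi: "eventually (\<lambda>m. psi_vanishes b (\<beta> @ concat (replicate m (full_twist a i e)))
        \<longleftrightarrow> psi_vanishes b (\<beta> @ concat (replicate (Suc m) (full_twist a i e)))) sequentially"
    by (rule eventually_stable_along_powers[where P = "psi_vanishes b",
          OF psi_vanishes_append_negative psi_vanishes_append_positive twist])
  have psi'_at: "eventually (\<lambda>m. psi'_vanishes b q (\<beta> @ concat (replicate m (full_twist a i e)))
        \<longleftrightarrow> psi'_vanishes b q (\<beta> @ concat (replicate (Suc m) (full_twist a i e)))) sequentially"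
    if "q \<in> {1..b}" for q
    by (rule eventually_stable_along_powers[where P = "psi'_vanishes b q",
          OF psi'_vanishes_append_negative[OF that] psi'_vanishes_append_positive[OF that] twist])
  then have psi': "eventually (\<lambda>m. \<forall>q\<in>{1..b}.
        psi'_vanishes b q (\<beta> @ concat (replicate m (full_twist a i e)))
        \<longleftrightarrow> psi'_vanishes b q (\<beta> @ concat (replicate (Suc m) (full_twist a i e)))) sequentially"
    by (intro eventually_ball_finite) auto
  show ?thesis
    using eventually_conj[OF psi psi'] unfolding eventually_at_top_dense .
qed

end
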